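(* Let $0<\alpha<1$ and let $\mu,\sigma,\varepsilon$ satisfy (A3). Put $$c_0=\operatorname{corr}\big(F^{-1}(U),\mathbf 1_{(\alpha,1)}(U)\big),\qquad \operatorname{TVaR}_\alpha(F)=\frac1{1-\alpha}\int_\alpha^1F^{-1}(u)\,du.$$ Then $$\sup_{G\in\mathcal M_\varepsilon(\mu,\sigma)}\operatorname{TVaR}_\alpha(G)=\mu+\sigma\,\frac{\frac{\alpha}{1-\alpha}+\lambda(\operatorname{TVaR}_\alpha(F)-\mu_F)}{\sqrt{\frac{\alpha}{1-\alpha}+2\lambda(\operatorname{TVaR}_\alpha(F)-\mu_F)+\lambda^2\sigma_F^2}}.$$ Here $\lambda$ is determined as follows. - If $\varepsilon<(\mu_F-\mu)^2+(\sigma_F-\sigma)^2+2\sigma\sigma_F(1-c_0)$, then $$\lambda=\frac{K}{\sigma_F^2}\sqrt{\frac{C^2-V\sigma_F^2}{K^2-\sigma^2\sigma_F^2}}-\frac{C}{\sigma_F^2},$$ with $V=\frac{\alpha}{1-\alpha}$, $C=\operatorname{TVaR}_\alpha(F)-\mu_F$ and $K=\frac12(\mu_F^2+\sigma_F^2+\mu^2+\sigma^2-2\mu\mu_F-\varepsilon)$. - Otherwise, $\lambda=0$.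
   Context: Let $(\Omega,\mathcal A,\mathbb P)$ be an atomless probability space and $U\sim\mathcal U(0,1)$. $\mathcal M^2$ denotes the distribution functions on $\mathbb R$ with finite second moment, and $G^{-1}(u)=\inf\{y:G(y)\ge u\}$. $\operatorname{TVaR}_\alpha(G)=\frac1{1-\alpha}\int_\alpha^1G^{-1}(u)\,du$. This is the distortion risk measure $H_g(G)=\int_0^1\gamma G^{-1}$ with weight $\gamma(u)=\frac1{1-\alpha}\mathbf 1_{(\alpha,1)}(u)$. The order-2 Wasserstein distance is $d_W(G_1,G_2)=\big(\int_0^1(G_1^{-1}-G_2^{-1})^2\big)^{1/2}$. A reference $F\in\mathcal M^2$ is fixed, with mean $\mu_F$ and standard deviation $\sigma_F>0$. For $\mu\in\mathbb R$, $\sigma>0$, $0\le\varepsilon\le\infty$: $$\mathcal M_\varepsilon(\mu,\sigma)=\Big\{G\in\mathcal M^2:\int x\,dG=\mu,\ \int x^2dG=\mu^2+\sigma^2,\ d_W(F,G)\le\sqrt\varepsilon\Big\}.$$ (A3) denotes the assumption $\varepsilon>(\mu_F-\mu)^2+(\sigma_F-\sigma)^2$. *)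

theory Defs
  imports "HOL-Probability.Probability"
begin

definition finite_second_moment :: "real measure \<Rightarrow> bool" where
  "finite_second_moment M \<longleftrightarrow> real_distribution M \<and> integrable M (\<lambda>x. x ^ 2)"

definition quantile :: "real measure \<Rightarrow> real \<Rightarrow> real" where
  "quantile M u = Inf {y. cdf M y \<ge> u}"

definition dmean :: "real measure \<Rightarrow> real" where
  "dmean M = (\<integral>x. x \<partial>M)"

definition dsd :: "real measure \<Rightarrow> real" where
  "dsd M = sqrt ((\<integral>x. x ^ 2 \<partial>M) - (dmean M) ^ 2)"

definition TVaR :: "real \<Rightarrow> real measure \<Rightarrow> real" where
  "TVaR \<alpha> M = (1 / (1 - \<alpha>)) * (LBINT u:{\<alpha><..<1}. quantile M u)"

definition wass2_sq :: "real measure \<Rightarrow> real measure \<Rightarrow> real" where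
  "wass2_sq G1 G2 = (LBINT u:{0<..<1}. (quantile G1 u - quantile G2 u) ^ 2)"

definition wass2 :: "real measure \<Rightarrow> real measure \<Rightarrow> real" where
  "wass2 G1 G2 = sqrt (wass2_sq G1 G2)"

definition amb_set :: "real measure \<Rightarrow> ereal \<Rightarrow> real \<Rightarrow> real \<Rightarrow> real measure set" where
  "amb_set F \<epsilon> \<mu> \<sigma> = {G. finite_second_moment G \<and> (\<integral>x. x \<partial>G) = \<mu> \<and>
       (\<integral>x. x ^ 2 \<partial>G) = \<mu> ^ 2 + \<sigma> ^ 2 \<and> (\<epsilon> = \<infinity> \<or> wass2 F G \<le> sqrt (real_of_ereal \<epsilon>))}"

definition covar :: "'a measure \<Rightarrow> ('a \<Rightarrow> real) \<Rightarrow> ('a \<Rightarrow> real) \<Rightarrow> real" where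
  "covar P X Y = (\<integral>w. X w * Y w \<partial>P) - (\<integral>w. X w \<partial>P) * (\<integral>w. Y w \<partial>P)"

definition corr :: "'a measure \<Rightarrow> ('a \<Rightarrow> real) \<Rightarrow> ('a \<Rightarrow> real) \<Rightarrow> real" where
  "corr P X Y = covar P X Y / sqrt (covar P X X * covar P Y Y)"

text \<open>U ~ Unif(0,1): identity random variable on the uniform measure on (0,1).\<close>
definition unif01 :: "real measure" where
  "unif01 = uniform_measure lborel {0<..<1}"

end

theory Submission
  imports Defs
begin

text \<open>
  Represent each distribution G by its quantile function \<open>q\<^sub>G\<close> on (0,1) with Lebesgue measure.
  Mean, second moment, \<open>(1 - \<alpha>) TVaR\<^sub>\<alpha>(G)\<close> and the squared Wasserstein distance to F then become
  inner products of \<open>q\<^sub>G\<close> with 1, the indicator I of \<open>(\<alpha>, 1)\<close> and \<open>q\<^sub>F\<close>.  For \<open>\<lambda> \<ge> 0\<close>,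
  Cauchy--Schwarz between \<open>q\<^sub>G - \<mu>\<close> and \<open>I / (1 - \<alpha>) + \<lambda> q\<^sub>F\<close> bounds \<open>TVaR\<^sub>\<alpha>(G) - \<mu>\<close> plus \<open>\<lambda>\<close>
  times the covariance of \<open>q\<^sub>F\<close> and \<open>q\<^sub>G\<close>, and the Wasserstein constraint bounds that covariance
  from below.  The equality case of Cauchy--Schwarz is a nondecreasing combination of I and \<open>q\<^sub>F\<close>,
  hence itself a quantile function; it is feasible and attains the bound when \<open>\<lambda>\<close> either makes
  the Wasserstein constraint binding or is 0 with the constraint slack.  The stated \<open>\<lambda>\<close> is the
  root of the binding equation, and the threshold involving \<open>c\<^sub>0\<close> decides which case occurs.
\<close>

abbreviation lborel01 :: "real measure" where
  "lborel01 \<equiv> restrict_space lborel {0<..<1}"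

lemma prob_space_lborel01: "prob_space lborel01"
  by (auto simp: emeasure_restrict_space space_restrict_space intro!: prob_spaceI)

lemma borel_measurable_lborel01: "f \<in> borel_measurable borel \<Longrightarrow> f \<in> borel_measurable lborel01"
  by (rule measurable_restrict_space1) simp

lemma integrable_lborel01_const [simp]: "integrable lborel01 (\<lambda>_. c::real)"
  using finite_measure.integrable_const[OF prob_space.finite_measure[OF prob_space_lborel01]] .

lemma integral_lborel01: "integral\<^sup>L lborel01 f = (LBINT u:{0<..<1}. f u)"
  for f :: "real \<Rightarrow> real"
  by (simp add: integral_restrict_space set_lebesgue_integral_def)

lemma integral_lborel01_indicator:
  assumes "0 \<le> a" "a \<le> 1"
  shows "integral\<^sup>L lborel01 (indicator {a<..<1}) = 1 - (a::real)"
proof -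
  have "integral\<^sup>L lborel01 (indicator {a<..<1}) = measure lborel01 {a<..<1}"
    using assms by (simp add: space_restrict_space Int_absorb2 subset_eq)
  also have "\<dots> = 1 - a"
    using assms by (subst measure_restrict_space) auto
  finally show ?thesis .
qed

lemma integral_unif01:
  fixes f :: "real \<Rightarrow> real"
  assumes "f \<in> borel_measurable borel"
  shows "integral\<^sup>L unif01 f = integral\<^sup>L lborel01 f"
proof -
  have "unif01 = density lborel (\<lambda>u. ennreal (indicator {0<..<1} u))"
    by (auto simp: unif01_def uniform_measure_def intro!: arg_cong[where f="density lborel"]
        split: split_indicator)
  also have "integral\<^sup>L \<dots> f = (LBINT u:{0<..<1}. f u)"
    using assms by (subst integral_density) (auto simp: set_lebesgue_integral_def)
  finally show ?thesis
    by (simp add: integral_lborel01)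
qed

definition square_integrable :: "(real \<Rightarrow> real) \<Rightarrow> bool" where
  "square_integrable x \<longleftrightarrow> x \<in> borel_measurable borel \<and> integrable lborel01 (\<lambda>u. (x u)\<^sup>2)"

lemma square_integrable_const: "square_integrable (\<lambda>_. c)"
  by (simp add: square_integrable_def)

lemma square_integrable_integrable_mult:
  assumes "square_integrable x" "square_integrable y"
  shows "integrable lborel01 (\<lambda>u. x u * y u)"
proof (rule Bochner_Integration.integrable_bound)
  show "integrable lborel01 (\<lambda>u. (x u)\<^sup>2 + (y u)\<^sup>2)"
    using assms by (simp add: square_integrable_def)
  show "(\<lambda>u. x u * y u) \<in> borel_measurable lborel01"
    using assms by (auto simp: square_integrable_def intro!: borel_measurable_lborel01)
  have "\<bar>a * b\<bar> \<le> a\<^sup>2 + b\<^sup>2" for a b :: real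
    using sum_squares_bound[of a b] sum_squares_bound[of a "- b"] by (auto simp: abs_if)
  then show "AE u in lborel01. norm (x u * y u) \<le> norm ((x u)\<^sup>2 + (y u)\<^sup>2)"
    by simp
qed

lemma square_integrable_integrable: "square_integrable x \<Longrightarrow> integrable lborel01 x"
  using square_integrable_integrable_mult[OF _ square_integrable_const[of 1]] by simp

lemma square_integrable_indicator:
  assumes "0 \<le> a"
  shows "square_integrable (indicator {a<..<1::real})"
proof -
  have "(\<lambda>u. (indicator {a<..<1} u)\<^sup>2) = (indicator {a<..<1} :: real \<Rightarrow> real)"
    by (auto split: split_indicator)
  moreover have "integrable lborel01 (indicator {a<..<1} :: real \<Rightarrow> real)"
    using assms finite_measure.emeasure_finite[OF prob_space.finite_measure[OF prob_space_lborel01]]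
    by (intro integrable_real_indicator) (auto simp: sets_restrict_space_iff less_top[symmetric])
  ultimately show ?thesis
    by (simp add: square_integrable_def)
qed

lemma integral_product_of_lin_combs:
  assumes x: "square_integrable x" and y: "square_integrable y" and z: "square_integrable z"
  shows "integral\<^sup>L lborel01 (\<lambda>u. (a0 + a1 * x u + a2 * y u + a3 * z u) * (b0 + b1 * x u + b2 * y u + b3 * z u))
    = a0 * b0 + (a0 * b1 + a1 * b0) * integral\<^sup>L lborel01 x + (a0 * b2 + a2 * b0) * integral\<^sup>L lborel01 y
      + (a0 * b3 + a3 * b0) * integral\<^sup>L lborel01 z + a1 * b1 * integral\<^sup>L lborel01 (\<lambda>u. x u * x u)
      + (a1 * b2 + a2 * b1) * integral\<^sup>L lborel01 (\<lambda>u. x u * y u)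
      + (a1 * b3 + a3 * b1) * integral\<^sup>L lborel01 (\<lambda>u. x u * z u)
      + a2 * b2 * integral\<^sup>L lborel01 (\<lambda>u. y u * y u)
      + (a2 * b3 + a3 * b2) * integral\<^sup>L lborel01 (\<lambda>u. y u * z u)
      + a3 * b3 * integral\<^sup>L lborel01 (\<lambda>u. z u * z u)"
proof -
  have "(\<lambda>u. (a0 + a1 * x u + a2 * y u + a3 * z u) * (b0 + b1 * x u + b2 * y u + b3 * z u)) =
    (\<lambda>u. a0 * b0 + (a0 * b1 + a1 * b0) * x u + (a0 * b2 + a2 * b0) * y u + (a0 * b3 + a3 * b0) * z u
      + a1 * b1 * (x u * x u) + (a1 * b2 + a2 * b1) * (x u * y u) + (a1 * b3 + a3 * b1) * (x u * z u)
      + a2 * b2 * (y u * y u) + (a2 * b3 + a3 * b2) * (y u * z u) + a3 * b3 * (z u * z u))"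
    by (simp add: fun_eq_iff algebra_simps)
  moreover have "integrable lborel01 x" "integrable lborel01 y" "integrable lborel01 z"
    using x y z by (auto intro: square_integrable_integrable)
  moreover have "integrable lborel01 (\<lambda>u. x u * x u)" "integrable lborel01 (\<lambda>u. x u * y u)"
    "integrable lborel01 (\<lambda>u. x u * z u)" "integrable lborel01 (\<lambda>u. y u * y u)"
    "integrable lborel01 (\<lambda>u. y u * z u)" "integrable lborel01 (\<lambda>u. z u * z u)"
    using x y z by (auto intro: square_integrable_integrable_mult)
  ultimately show ?thesis
    by (simp add: measure_restrict_space)
qed

lemma square_integrable_lin_comb:
  assumes x: "square_integrable x" and y: "square_integrable y"
  shows "square_integrable (\<lambda>u. c + a * x u + b * y u)"
proof -
  have "(\<lambda>u. (c + a * x u + b * y u)\<^sup>2) = (\<lambda>u. c\<^sup>2 + (2 * c * a) * x u + (2 * c * b) * y u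
      + a\<^sup>2 * (x u * x u) + (2 * a * b) * (x u * y u) + b\<^sup>2 * (y u * y u))"
    by (simp add: fun_eq_iff power2_eq_square algebra_simps)
  moreover have "integrable lborel01 x" "integrable lborel01 y"
    using x y by (auto intro: square_integrable_integrable)
  moreover have "integrable lborel01 (\<lambda>u. x u * x u)" "integrable lborel01 (\<lambda>u. x u * y u)"
    "integrable lborel01 (\<lambda>u. y u * y u)"
    using x y by (auto intro: square_integrable_integrable_mult)
  moreover have "x \<in> borel_measurable borel" "y \<in> borel_measurable borel"
    using x y by (simp_all add: square_integrable_def)
  ultimately show ?thesis
    by (simp add: square_integrable_def)
qed

lemma borel_measurable_quantile:
  assumes "real_distribution M"
  shows "quantile M \<in> borel_measurable borel"
proof -
  interpret cdf_distribution M
    using assms by (simp add: cdf_distribution_def)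
  let ?pieces = "{{..0}, {0<..<1}, {1}, {1<..}} :: real set set"
  show ?thesis
  proof (rule measurable_piecewise_restrict[of ?pieces])
    fix \<Omega> assume "\<Omega> \<in> ?pieces"
    then consider "\<Omega> = {..0}" | "\<Omega> = {0<..<1}" | "\<Omega> = {1}" | "\<Omega> = {1<..}"
      by blast
    then show "quantile M \<in> borel_measurable (restrict_space borel \<Omega>)"
    proof cases
      case 1
      then have "u \<in> \<Omega> \<Longrightarrow> quantile M u = Inf UNIV" for u
        by (auto simp: quantile_def intro!: arg_cong[where f=Inf] intro: order_trans[OF _ cdf_nonneg])
      then show ?thesis
        by (subst measurable_cong[of _ _ "\<lambda>_. Inf UNIV"]) (auto simp: space_restrict_space)
    next
      case 2
      then show ?thesis
        using measurable_CI by (simp add: quantile_def[abs_def])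
    next
      case 3
      then show ?thesis
        by (subst measurable_cong[of _ _ "\<lambda>_. quantile M 1"]) (auto simp: space_restrict_space)
    next
      case 4
      then have "u \<in> \<Omega> \<Longrightarrow> quantile M u = Inf {}" for u
        using cdf_bounded_prob by (auto simp: quantile_def intro!: arg_cong[where f=Inf])
          (meson less_le_not_le order_trans)
      then show ?thesis
        by (subst measurable_cong[of _ _ "\<lambda>_. Inf {}"]) (auto simp: space_restrict_space)
    qed
  qed auto
qed

lemma mono_on_quantile:
  assumes "real_distribution M"
  shows "mono_on {0<..<1} (quantile M)"
proof -
  interpret cdf_distribution M
    using assms by (simp add: cdf_distribution_def)
  show ?thesis
    using mono_I by (simp add: quantile_def[abs_def])
qed

lemma distr_quantile:
  assumes "real_distribution M"
  shows "distr lborel01 borel (quantile M) = M"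
proof -
  interpret cdf_distribution M
    using assms by (simp add: cdf_distribution_def)
  show ?thesis
    using distr_I_eq_M by (simp add: quantile_def[abs_def])
qed

lemma integral_quantile:
  assumes "real_distribution M" "g \<in> borel_measurable borel"
  shows "integral\<^sup>L lborel01 (\<lambda>u. g (quantile M u)) = integral\<^sup>L M (g :: real \<Rightarrow> real)"
  using integral_distr[OF borel_measurable_lborel01[OF borel_measurable_quantile], of M g] assms
  by (simp add: distr_quantile)

lemma square_integrable_quantile:
  assumes "finite_second_moment M"
  shows "square_integrable (quantile M)"
proof -
  have M: "real_distribution M" "integrable M (\<lambda>x. x\<^sup>2)"
    using assms by (simp_all add: finite_second_moment_def)
  then have "integrable (distr lborel01 borel (quantile M)) (\<lambda>x. x\<^sup>2)"
    by (simp add: distr_quantile)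
  then show ?thesis
    using M borel_measurable_quantile
      integrable_distr_eq[OF borel_measurable_lborel01[OF borel_measurable_quantile], of M "\<lambda>x. x\<^sup>2"]
    by (simp add: square_integrable_def)
qed

lemma real_distribution_distr_lborel01:
  assumes "q \<in> borel_measurable borel"
  shows "real_distribution (distr lborel01 borel q)"
  using prob_space.prob_space_distr[OF prob_space_lborel01 borel_measurable_lborel01[OF assms]]
  by (simp add: real_distribution_def real_distribution_axioms_def)

lemma distr_lborel01_moments:
  assumes q: "square_integrable q"
  shows "finite_second_moment (distr lborel01 borel q)"
    and "(\<integral>x. x \<partial>distr lborel01 borel q) = integral\<^sup>L lborel01 q"
    and "(\<integral>x. x\<^sup>2 \<partial>distr lborel01 borel q) = integral\<^sup>L lborel01 (\<lambda>u. q u * q u)"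
proof -
  have q_borel: "q \<in> borel_measurable borel"
    using q by (simp add: square_integrable_def)
  note q_lborel01 = borel_measurable_lborel01[OF q_borel]
  have "integrable (distr lborel01 borel q) (\<lambda>x. x\<^sup>2)"
    using q integrable_distr_eq[OF q_lborel01, of "\<lambda>x. x\<^sup>2"] by (simp add: square_integrable_def)
  then show "finite_second_moment (distr lborel01 borel q)"
    using real_distribution_distr_lborel01[OF q_borel] by (simp add: finite_second_moment_def)
  show "(\<integral>x. x \<partial>distr lborel01 borel q) = integral\<^sup>L lborel01 q"
    and "(\<integral>x. x\<^sup>2 \<partial>distr lborel01 borel q) = integral\<^sup>L lborel01 (\<lambda>u. q u * q u)"
    by (simp_all add: integral_distr[OF q_lborel01] power2_eq_square)
qed

lemma cdf_distr_lborel01: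
  assumes "q \<in> borel_measurable borel"
  shows "cdf (distr lborel01 borel q) y = measure lborel01 {u \<in> {0<..<1}. q u \<le> y}"
  unfolding cdf_def using assms
  by (subst measure_distr) (auto simp: space_restrict_space intro!: borel_measurable_lborel01
      arg_cong[where f="measure lborel01"])

lemma measure_lborel01_Ioc: "0 \<le> t \<Longrightarrow> t < 1 \<Longrightarrow> measure lborel01 {0<..t} = t"
  by (subst measure_restrict_space) auto

lemma le_cdf_distr_lborel01:
  assumes q: "q \<in> borel_measurable borel" "mono_on {0<..<1} q" and u: "u \<in> {0<..<1}"
  shows "u \<le> cdf (distr lborel01 borel q) (q u)"
proof -
  interpret prob_space lborel01
    by (rule prob_space_lborel01)
  have "{0<..u} \<subseteq> {v \<in> {0<..<1}. q v \<le> q u}"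
    using u q(2) by (auto simp: mono_on_def)
  moreover have "{v \<in> {0<..<1}. q v \<le> q u} \<in> sets lborel01"
    using measurable_sets[OF borel_measurable_lborel01[OF q(1)], of "{..q u}"]
    by (simp add: space_restrict_space Int_def conj_commute)
  ultimately have "measure lborel01 {0<..u} \<le> measure lborel01 {v \<in> {0<..<1}. q v \<le> q u}"
    by (intro finite_measure_mono)
  then show ?thesis
    using u measure_lborel01_Ioc[of u] by (simp add: cdf_distr_lborel01[OF q(1)])
qed

lemma cdf_distr_lborel01_less:
  assumes q: "q \<in> borel_measurable borel" "mono_on {0<..<1} q"
    and u: "u \<in> {0<..<1}" "isCont q u" and y: "y < q u"
  shows "cdf (distr lborel01 borel q) y < u"
proof -
  interpret prob_space lborel01
    by (rule prob_space_lborel01)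
  have "eventually (\<lambda>v. y < q v) (at_left u)"
    using order_tendstoD(1)[OF tendsto_mono[OF at_le[OF subset_UNIV]] y] u(2)
    by (simp add: isCont_def)
  then obtain b where b: "b < u" "\<And>v. b < v \<Longrightarrow> v < u \<Longrightarrow> y < q v"
    by (auto simp: eventually_at_left_field)
  define b' where "b' = max b 0"
  have "{v \<in> {0<..<1}. q v \<le> y} \<subseteq> {0<..b'}"
  proof
    fix v assume "v \<in> {v \<in> {0<..<1}. q v \<le> y}"
    then have v: "0 < v" "v < 1" "q v \<le> y"
      by auto
    have "v < u"
      using v u q(2) y by (force simp: mono_on_def)
    then show "v \<in> {0<..b'}"
      using v b(2)[of v] by (force simp: b'_def)
  qed
  moreover have "{0<..b'} \<in> sets lborel01"
    using b u by (subst sets_restrict_space_iff) (auto simp: b'_def)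
  ultimately have "measure lborel01 {v \<in> {0<..<1}. q v \<le> y} \<le> measure lborel01 {0<..b'}"
    by (intro finite_measure_mono)
  also have "\<dots> < u"
    using b u measure_lborel01_Ioc[of b'] by (simp add: b'_def)
  finally show ?thesis
    by (simp add: cdf_distr_lborel01[OF q(1)])
qed

lemma quantile_distr_lborel01_at_isCont:
  assumes q: "q \<in> borel_measurable borel" "mono_on {0<..<1} q"
    and u: "u \<in> {0<..<1}" "isCont q u"
  shows "quantile (distr lborel01 borel q) u = q u"
  unfolding quantile_def
  using le_cdf_distr_lborel01[OF q u(1)] cdf_distr_lborel01_less[OF q u]
  by (intro cInf_eq_minimum) (auto simp: not_less[symmetric])

lemma AE_quantile_distr_lborel01:
  assumes "q \<in> borel_measurable borel" "mono_on {0<..<1} q"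
  shows "AE u in lborel01. quantile (distr lborel01 borel q) u = q u"
proof -
  have "countable {u \<in> {0<..<1}. \<not> isCont q u}"
    using mono_on_ctble_discont_open[OF _ assms(2)] by simp
  then have "AE u in lborel. u \<notin> {u \<in> {0<..<1}. \<not> isCont q u}"
    by (intro AE_not_in countable_imp_null_set_lborel)
  then have "AE u in lborel. u \<in> {0<..<1} \<longrightarrow> quantile (distr lborel01 borel q) u = q u"
    by eventually_elim (use quantile_distr_lborel01_at_isCont[OF assms] in auto)
  then show ?thesis
    by (subst AE_restrict_space_iff) auto
qed

lemma multiplier_root:
  fixes V s \<sigma> C K :: real
  assumes V: "V > 0" and s: "s > 0" and \<sigma>: "\<sigma> > 0" and C: "C \<ge> 0"
    and C_sq: "C\<^sup>2 \<le> V * s\<^sup>2" and K_less: "K < \<sigma> * s" and K_greater: "\<sigma> * C < K * sqrt V"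
  defines "t \<equiv> K * sqrt ((C\<^sup>2 - V * s\<^sup>2) / (K\<^sup>2 - \<sigma>\<^sup>2 * s\<^sup>2))"
  shows "C \<le> t" and "K\<^sup>2 * (V * s\<^sup>2 + t\<^sup>2 - C\<^sup>2) = s\<^sup>2 * (\<sigma> * t)\<^sup>2"
proof -
  have "0 < K * sqrt V"
    using \<sigma> C K_greater by (smt (verit) mult_nonneg_nonneg)
  then have K: "K > 0"
    using V by (simp add: zero_less_mult_iff)
  have "K\<^sup>2 < (\<sigma> * s)\<^sup>2"
    using K K_less by (intro power_strict_mono) auto
  then have den: "K\<^sup>2 - \<sigma>\<^sup>2 * s\<^sup>2 < 0"
    by (simp add: power_mult_distrib)
  define R where "R = (C\<^sup>2 - V * s\<^sup>2) / (K\<^sup>2 - \<sigma>\<^sup>2 * s\<^sup>2)"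
  have "R \<ge> 0"
    unfolding R_def using den C_sq by (intro divide_nonpos_neg) auto
  then have t: "t \<ge> 0" "t\<^sup>2 = K\<^sup>2 * R"
    using K by (simp_all add: t_def R_def power_mult_distrib)
  have key: "t\<^sup>2 * (\<sigma>\<^sup>2 * s\<^sup>2 - K\<^sup>2) = K\<^sup>2 * (V * s\<^sup>2 - C\<^sup>2)"
    using den by (simp add: t(2) R_def field_simps)
  then show "K\<^sup>2 * (V * s\<^sup>2 + t\<^sup>2 - C\<^sup>2) = s\<^sup>2 * (\<sigma> * t)\<^sup>2"
    by (simp add: algebra_simps)
  have "(\<sigma> * C)\<^sup>2 < (K * sqrt V)\<^sup>2"
    using \<sigma> C K_greater by (intro power_strict_mono) auto
  then have "\<sigma>\<^sup>2 * C\<^sup>2 < K\<^sup>2 * V"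
    using V by (simp add: power_mult_distrib)
  then have "C\<^sup>2 * (\<sigma>\<^sup>2 * s\<^sup>2 - K\<^sup>2) \<le> t\<^sup>2 * (\<sigma>\<^sup>2 * s\<^sup>2 - K\<^sup>2)"
    unfolding key using s by (simp add: algebra_simps mult_left_mono)
  then have "C\<^sup>2 \<le> t\<^sup>2"
    using den by simp
  then show "C \<le> t"
    using t(1) by (rule power2_le_imp_le)
qed

lemma multiplier_equation:
  fixes V s \<sigma> C K lam :: real
  assumes V: "V > 0" and s: "s > 0" and \<sigma>: "\<sigma> > 0" and C: "C \<ge> 0"
    and C_sq: "C\<^sup>2 \<le> V * s\<^sup>2" and K_less: "K < \<sigma> * s" and K_greater: "\<sigma> * C < K * sqrt V"
    and lam: "lam = K / s\<^sup>2 * sqrt ((C\<^sup>2 - V * s\<^sup>2) / (K\<^sup>2 - \<sigma>\<^sup>2 * s\<^sup>2)) - C / s\<^sup>2"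
  shows "lam \<ge> 0" and "\<sigma> * (C + lam * s\<^sup>2) = K * sqrt (V + 2 * lam * C + lam\<^sup>2 * s\<^sup>2)"
proof -
  define t where "t = K * sqrt ((C\<^sup>2 - V * s\<^sup>2) / (K\<^sup>2 - \<sigma>\<^sup>2 * s\<^sup>2))"
  note root = multiplier_root[OF assms(1-7), folded t_def]
  have lam_t: "C + lam * s\<^sup>2 = t"
    using s by (simp add: lam t_def field_simps)
  then have "0 \<le> lam * s\<^sup>2"
    using root(1) by simp
  then show "lam \<ge> 0"
    using s by (simp add: zero_le_mult_iff)
  have "s\<^sup>2 * (V + 2 * lam * C + lam\<^sup>2 * s\<^sup>2) = V * s\<^sup>2 + t\<^sup>2 - C\<^sup>2"
    unfolding lam_t[symmetric] by (simp add: power2_eq_square algebra_simps)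
  then have "s\<^sup>2 * (K\<^sup>2 * (V + 2 * lam * C + lam\<^sup>2 * s\<^sup>2)) = K\<^sup>2 * (V * s\<^sup>2 + t\<^sup>2 - C\<^sup>2)"
    by (metis mult.left_commute)
  also have "\<dots> = s\<^sup>2 * (\<sigma> * t)\<^sup>2"
    by (rule root(2))
  finally have "sqrt (K\<^sup>2 * (V + 2 * lam * C + lam\<^sup>2 * s\<^sup>2)) = \<sigma> * t"
    using s \<sigma> root(1) C by simp
  moreover have "K \<ge> 0"
    using K_greater \<sigma> C V by (smt (verit) mult_nonneg_nonneg mult_nonpos_nonneg real_sqrt_gt_zero)
  ultimately show "\<sigma> * (C + lam * s\<^sup>2) = K * sqrt (V + 2 * lam * C + lam\<^sup>2 * s\<^sup>2)"
    using lam_t by (simp add: real_sqrt_mult)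
qed

lemma wass2_sq_eq_integral:
  "wass2_sq G1 G2 = integral\<^sup>L lborel01 (\<lambda>u. (quantile G1 u - quantile G2 u) * (quantile G1 u - quantile G2 u))"
  by (simp add: wass2_sq_def integral_lborel01 power2_eq_square)

lemma mem_amb_setD:
  assumes "G \<in> amb_set F \<epsilon> \<mu> \<sigma>"
  shows "finite_second_moment G" "dmean G = \<mu>" "(\<integral>x. x\<^sup>2 \<partial>G) = \<mu>\<^sup>2 + \<sigma>\<^sup>2"
    and "\<epsilon> \<noteq> \<infinity> \<Longrightarrow> wass2_sq F G \<le> real_of_ereal \<epsilon>"
  using assms by (auto simp: amb_set_def dmean_def wass2_def)

locale tvar_ambiguity =
  fixes F :: "real measure" and \<alpha> \<mu> \<sigma> :: real and \<epsilon> :: ereal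
  assumes F: "finite_second_moment F" and dsd_F_pos: "dsd F > 0"
    and \<alpha>: "0 < \<alpha>" "\<alpha> < 1" and \<sigma>_pos: "\<sigma> > 0"
begin

abbreviation tail :: "real \<Rightarrow> real" where
  "tail \<equiv> indicator {\<alpha><..<1}"

definition V :: real where
  "V = \<alpha> / (1 - \<alpha>)"

definition C :: real where
  "C = TVaR \<alpha> F - dmean F"

definition K :: real where
  "K = (dmean F ^ 2 + dsd F ^ 2 + \<mu> ^ 2 + \<sigma> ^ 2 - 2 * \<mu> * dmean F - real_of_ereal \<epsilon>) / 2"

text \<open>\<open>H lam\<close> is the standard deviation of \<open>tail u / (1 - \<alpha>) + lam * quantile F u\<close>.\<close>
definition H :: "real \<Rightarrow> real" where
  "H lam = sqrt (V + 2 * lam * C + lam ^ 2 * dsd F ^ 2)"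

definition tvar_bound :: "real \<Rightarrow> real" where
  "tvar_bound lam = \<mu> + \<sigma> * (V + lam * C) / H lam"

lemma real_distribution_F: "real_distribution F"
  using F by (simp add: finite_second_moment_def)

lemma second_moment_F: "(\<integral>x. x\<^sup>2 \<partial>F) = (dmean F)\<^sup>2 + (dsd F)\<^sup>2"
  using dsd_F_pos by (simp add: dsd_def)

lemma V_pos: "V > 0"
  using \<alpha> by (simp add: V_def)

lemma integral_tail_quantile: "integral\<^sup>L lborel01 (\<lambda>u. tail u * quantile G u) = (1 - \<alpha>) * TVaR \<alpha> G"
proof -
  have "(\<lambda>u. indicator {0<..<1} u * (tail u * quantile G u)) = (\<lambda>u. tail u * quantile G u)"
    using \<alpha> by (auto simp: fun_eq_iff split: split_indicator)
  then show ?thesis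
    using \<alpha> by (simp add: integral_lborel01 TVaR_def set_lebesgue_integral_def)
qed

lemma integral_quantile_lin_combs:
  assumes G: "finite_second_moment G"
  defines "P \<equiv> integral\<^sup>L lborel01 (\<lambda>u. quantile F u * quantile G u)"
  shows "integral\<^sup>L lborel01 (\<lambda>u. (a0 + a1 * tail u + a2 * quantile F u + a3 * quantile G u)
        * (b0 + b1 * tail u + b2 * quantile F u + b3 * quantile G u))
    = a0 * b0 + (a0 * b1 + a1 * b0) * (1 - \<alpha>) + (a0 * b2 + a2 * b0) * dmean F
      + (a0 * b3 + a3 * b0) * dmean G + a1 * b1 * (1 - \<alpha>)
      + (a1 * b2 + a2 * b1) * ((1 - \<alpha>) * TVaR \<alpha> F) + (a1 * b3 + a3 * b1) * ((1 - \<alpha>) * TVaR \<alpha> G)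
      + a2 * b2 * ((dmean F)\<^sup>2 + (dsd F)\<^sup>2) + (a2 * b3 + a3 * b2) * P
      + a3 * b3 * (\<integral>x. x\<^sup>2 \<partial>G)"
proof -
  have moments: "integral\<^sup>L lborel01 (quantile M) = dmean M"
    "integral\<^sup>L lborel01 (\<lambda>u. quantile M u * quantile M u) = (\<integral>x. x\<^sup>2 \<partial>M)"
    if "finite_second_moment M" for M
    using that integral_quantile[of M "\<lambda>x. x"] integral_quantile[of M "\<lambda>x. x\<^sup>2"]
    by (simp_all add: finite_second_moment_def dmean_def power2_eq_square)
  have "(\<lambda>u. tail u * tail u) = tail"
    by (auto split: split_indicator)
  then show ?thesis
    using integral_product_of_lin_combs[OF square_integrable_indicator square_integrable_quantile[OF F]
        square_integrable_quantile[OF G]] moments[OF F] moments[OF G] second_moment_F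
      integral_tail_quantile[of F] integral_tail_quantile[of G] integral_lborel01_indicator[of \<alpha>] \<alpha>
    by (simp add: P_def)
qed

lemma C_nonneg: "C \<ge> 0"
proof -
  let ?f = "quantile F" and ?w = "1 / (1 - \<alpha>)"
  have "integral\<^sup>L lborel01 (\<lambda>u. (- 1 + ?w * tail u + 0 * ?f u + 0 * ?f u)
      * (- ?f \<alpha> + 0 * tail u + 1 * ?f u + 0 * ?f u)) = C"
    unfolding integral_quantile_lin_combs[OF F] using \<alpha> by (simp add: C_def field_simps)
  \<comment> \<open>both factors change sign at \<open>\<alpha>\<close>\<close>
  moreover have "0 \<le> (- 1 + ?w * tail u) * (?f u - ?f \<alpha>)" if "u \<in> {0<..<1}" for u
  proof (cases "\<alpha> < u")
    case True
    then show ?thesis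
      using \<alpha> that mono_on_quantile[OF real_distribution_F] by (simp add: mono_on_def)
  next
    case False
    then show ?thesis
      using \<alpha> that mono_on_quantile[OF real_distribution_F]
      by (simp add: mono_on_def mult_nonpos_nonpos)
  qed
  then have "0 \<le> integral\<^sup>L lborel01 (\<lambda>u. (- 1 + ?w * tail u) * (?f u - ?f \<alpha>))"
    by (intro integral_nonneg_AE AE_I2) (simp add: space_restrict_space)
  ultimately show ?thesis
    by simp
qed

text \<open>Cauchy--Schwarz for the covariance of \<open>quantile F\<close> and \<open>tail\<close>.\<close>
lemma C_sq_le: "C\<^sup>2 \<le> V * (dsd F)\<^sup>2"
proof -
  let ?f = "quantile F" and ?w = "1 / (1 - \<alpha>)" and ?a0 = "V * dmean F - C"
  have w: "?w * (1 - \<alpha>) = 1" "V = ?w - 1"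
    using \<alpha> by (simp_all add: V_def field_simps)
  have "0 \<le> integral\<^sup>L lborel01 (\<lambda>u. (?a0 + C * ?w * tail u + - V * ?f u + 0 * ?f u)
      * (?a0 + C * ?w * tail u + - V * ?f u + 0 * ?f u))"
    by (intro integral_nonneg_AE) simp
  also have "\<dots> = V * (V * (dsd F)\<^sup>2 - C\<^sup>2)"
    unfolding integral_quantile_lin_combs[OF F] C_def using w by algebra
  finally show ?thesis
    using V_pos by (simp add: zero_le_mult_iff)
qed

lemma corr_quantile_tail: "corr unif01 (quantile F) tail = C / (dsd F * sqrt V)"
proof -
  let ?f = "quantile F" and ?m = "dmean F" and ?s = "dsd F"
  have f: "?f \<in> borel_measurable borel"
    by (rule borel_measurable_quantile[OF real_distribution_F])
  have "integral\<^sup>L unif01 (\<lambda>u. ?f u * tail u) = (1 - \<alpha>) * TVaR \<alpha> F"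
    using f integral_tail_quantile[of F] by (simp add: integral_unif01 mult.commute)
  moreover have "integral\<^sup>L unif01 ?f = ?m"
    using f integral_quantile[OF real_distribution_F, of "\<lambda>x. x"]
    by (simp add: integral_unif01 dmean_def)
  moreover have "integral\<^sup>L unif01 (\<lambda>u. ?f u * ?f u) = ?m\<^sup>2 + ?s\<^sup>2"
    using f integral_quantile[OF real_distribution_F, of "\<lambda>x. x * x"] second_moment_F
    by (simp add: integral_unif01 power2_eq_square)
  moreover have "(\<lambda>u. tail u * tail u) = tail"
    by (auto split: split_indicator)
  then have "integral\<^sup>L unif01 (\<lambda>u. tail u * tail u) = 1 - \<alpha>" "integral\<^sup>L unif01 tail = 1 - \<alpha>"
    using \<alpha> integral_lborel01_indicator[of \<alpha>] integral_unif01[of tail] by simp_all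
  ultimately have "corr unif01 ?f tail
      = ((1 - \<alpha>) * TVaR \<alpha> F - ?m * (1 - \<alpha>)) / sqrt ((?m\<^sup>2 + ?s\<^sup>2 - ?m * ?m) * ((1 - \<alpha>) - (1 - \<alpha>) * (1 - \<alpha>)))"
    by (simp add: corr_def covar_def)
  also have "(?m\<^sup>2 + ?s\<^sup>2 - ?m * ?m) * ((1 - \<alpha>) - (1 - \<alpha>) * (1 - \<alpha>)) = (?s * (1 - \<alpha>))\<^sup>2 * V"
    using \<alpha> by (simp add: V_def power2_eq_square field_simps)
  also have "sqrt ((?s * (1 - \<alpha>))\<^sup>2 * V) = ?s * (1 - \<alpha>) * sqrt V"
    using \<alpha> dsd_F_pos by (simp add: real_sqrt_mult)
  also have "(1 - \<alpha>) * TVaR \<alpha> F - ?m * (1 - \<alpha>) = (1 - \<alpha>) * C"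
    by (simp add: C_def algebra_simps)
  also have "(1 - \<alpha>) * C / (?s * (1 - \<alpha>) * sqrt V) = C / (?s * sqrt V)"
    using \<alpha> by simp
  finally show ?thesis .
qed

lemma H_pos: "lam \<ge> 0 \<Longrightarrow> H lam > 0"
  using V_pos C_nonneg by (simp add: H_def add_pos_nonneg)

lemma H_sq: "lam \<ge> 0 \<Longrightarrow> (H lam)\<^sup>2 = V + 2 * lam * C + lam\<^sup>2 * (dsd F)\<^sup>2"
  using V_pos C_nonneg by (simp add: H_def add_pos_nonneg)

lemma TVaR_cauchy_schwarz:
  assumes G: "G \<in> amb_set F \<epsilon> \<mu> \<sigma>" and lam: "lam \<ge> 0"
  defines "P \<equiv> integral\<^sup>L lborel01 (\<lambda>u. quantile F u * quantile G u)"
  shows "TVaR \<alpha> G - \<mu> + lam * (P - dmean F * \<mu>) \<le> \<sigma> * H lam"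
proof -
  define w where "w = 1 / (1 - \<alpha>)"
  have w: "w * (1 - \<alpha>) = 1" "V = w - 1"
    using \<alpha> by (simp_all add: w_def V_def field_simps)
  let ?c = "H lam * \<mu> - \<sigma> * (1 + lam * dmean F)"
  have "0 \<le> integral\<^sup>L lborel01 (\<lambda>u.
      (?c + \<sigma> * w * tail u + \<sigma> * lam * quantile F u + - H lam * quantile G u)
    * (?c + \<sigma> * w * tail u + \<sigma> * lam * quantile F u + - H lam * quantile G u))"
    by (intro integral_nonneg_AE) simp
  also have "\<dots> = 2 * \<sigma>\<^sup>2 * (H lam)\<^sup>2 - 2 * \<sigma> * H lam * (TVaR \<alpha> G - \<mu> + lam * (P - dmean F * \<mu>))"
    unfolding integral_quantile_lin_combs[OF mem_amb_setD(1)[OF G]] mem_amb_setD(2,3)[OF G] P_def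
    using w H_sq[OF lam] C_def by algebra
  finally have "\<sigma> * H lam * (TVaR \<alpha> G - \<mu> + lam * (P - dmean F * \<mu>)) \<le> \<sigma> * H lam * (\<sigma> * H lam)"
    by (simp add: power2_eq_square algebra_simps)
  then show ?thesis
    using \<sigma>_pos H_pos[OF lam] by simp
qed

lemma cross_moment_ge_K:
  assumes G: "G \<in> amb_set F \<epsilon> \<mu> \<sigma>" and finite: "\<epsilon> \<noteq> \<infinity>"
  shows "K \<le> integral\<^sup>L lborel01 (\<lambda>u. quantile F u * quantile G u) - dmean F * \<mu>"
proof -
  let ?P = "integral\<^sup>L lborel01 (\<lambda>u. quantile F u * quantile G u)"
  have "wass2_sq F G = integral\<^sup>L lborel01 (\<lambda>u. (0 + 0 * tail u + 1 * quantile F u + - 1 * quantile G u)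
      * (0 + 0 * tail u + 1 * quantile F u + - 1 * quantile G u))"
    by (simp add: wass2_sq_eq_integral)
  also have "\<dots> = (dmean F)\<^sup>2 + (dsd F)\<^sup>2 - 2 * ?P + \<mu>\<^sup>2 + \<sigma>\<^sup>2"
    unfolding integral_quantile_lin_combs[OF mem_amb_setD(1)[OF G]] mem_amb_setD(3)[OF G] by simp
  finally show ?thesis
    using mem_amb_setD(4)[OF G finite] unfolding K_def by (simp add: power2_eq_square)
qed

lemma TVaR_le_tvar_bound:
  assumes G: "G \<in> amb_set F \<epsilon> \<mu> \<sigma>" and lam: "lam \<ge> 0"
    and binding: "lam \<noteq> 0 \<Longrightarrow> \<epsilon> \<noteq> \<infinity> \<and> \<sigma> * (C + lam * (dsd F)\<^sup>2) = K * H lam"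
  shows "TVaR \<alpha> G \<le> tvar_bound lam"
proof (cases "lam = 0")
  case True
  have "\<sigma> * V / sqrt V = \<sigma> * sqrt V"
    using V_pos by (simp add: real_div_sqrt flip: times_divide_eq_right)
  then show ?thesis
    using TVaR_cauchy_schwarz[OF G lam] True by (simp add: tvar_bound_def H_def)
next
  case False
  then have finite: "\<epsilon> \<noteq> \<infinity>" and eq: "\<sigma> * (C + lam * (dsd F)\<^sup>2) = K * H lam"
    using binding by auto
  have "TVaR \<alpha> G - \<mu> \<le> \<sigma> * H lam - lam * K"
    using TVaR_cauchy_schwarz[OF G lam] mult_left_mono[OF cross_moment_ge_K[OF G finite] lam]
    by linarith
  also have "\<sigma> * H lam - lam * K = \<sigma> * (V + lam * C) / H lam"
  proof -
    have "H lam * (\<sigma> * H lam - lam * K) = \<sigma> * (H lam)\<^sup>2 - lam * (K * H lam)"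
      by (simp add: power2_eq_square algebra_simps)
    also have "\<dots> = \<sigma> * (V + lam * C)"
      unfolding H_sq[OF lam] eq[symmetric] by (simp add: power2_eq_square algebra_simps)
    finally show ?thesis
      using H_pos[OF lam] by (simp add: field_simps)
  qed
  finally show ?thesis
    by (simp add: tvar_bound_def)
qed

text \<open>The equality case of \<open>TVaR_cauchy_schwarz\<close>.\<close>
definition extremal_quantile :: "real \<Rightarrow> real \<Rightarrow> real" where
  "extremal_quantile lam u = \<mu> + \<sigma> / H lam * (tail u / (1 - \<alpha>) - 1 + lam * (quantile F u - dmean F))"

lemma extremal_quantile_eq: "extremal_quantile lam = (\<lambda>u. (\<mu> - \<sigma> / H lam * (1 + lam * dmean F))
    + \<sigma> / H lam / (1 - \<alpha>) * tail u + \<sigma> / H lam * lam * quantile F u)"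
  by (simp add: fun_eq_iff extremal_quantile_def algebra_simps)

lemma square_integrable_extremal_quantile: "square_integrable (extremal_quantile lam)"
  unfolding extremal_quantile_eq
  by (intro square_integrable_lin_comb square_integrable_indicator square_integrable_quantile F)
    (use \<alpha> in simp)

lemma mono_on_extremal_quantile:
  assumes "lam \<ge> 0"
  shows "mono_on {0<..<1} (extremal_quantile lam)"
proof (rule mono_onI)
  fix u v :: real assume uv: "u \<in> {0<..<1}" "v \<in> {0<..<1}" "u \<le> v"
  have "tail u / (1 - \<alpha>) \<le> tail v / (1 - \<alpha>)"
    using uv \<alpha> by (auto split: split_indicator)
  moreover have "lam * quantile F u \<le> lam * quantile F v"
    using assms uv mono_on_quantile[OF real_distribution_F] by (auto simp: mono_on_def mult_left_mono)
  ultimately show "extremal_quantile lam u \<le> extremal_quantile lam v"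
    unfolding extremal_quantile_def using \<sigma>_pos H_pos[OF assms]
    by (intro add_left_mono mult_left_mono) (auto simp: algebra_simps)
qed

lemma extremal_quantile_moments:
  assumes lam: "lam \<ge> 0"
  defines "q \<equiv> extremal_quantile lam"
  shows "integral\<^sup>L lborel01 q = \<mu>"
    and "integral\<^sup>L lborel01 (\<lambda>u. q u * q u) = \<mu>\<^sup>2 + \<sigma>\<^sup>2"
    and "integral\<^sup>L lborel01 (\<lambda>u. tail u * q u) = (1 - \<alpha>) * tvar_bound lam"
    and "integral\<^sup>L lborel01 (\<lambda>u. (quantile F u - q u) * (quantile F u - q u))
      = (dmean F - \<mu>)\<^sup>2 + (dsd F)\<^sup>2 + \<sigma>\<^sup>2 - 2 * (\<sigma> / H lam) * (C + lam * (dsd F)\<^sup>2)"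
proof -
  define k w where "k = \<sigma> / H lam" and "w = 1 / (1 - \<alpha>)"
  have k: "k * H lam = \<sigma>" and w: "w * (1 - \<alpha>) = 1" "V = w - 1"
    using H_pos[OF lam] \<alpha> by (simp_all add: k_def w_def V_def field_simps)
  have k_sq: "k\<^sup>2 * (V + 2 * lam * C + lam\<^sup>2 * (dsd F)\<^sup>2) = \<sigma>\<^sup>2"
    unfolding H_sq[OF lam, symmetric] k[symmetric] by (simp add: power_mult_distrib)
  let ?c = "\<mu> - k * (1 + lam * dmean F)" and ?f = "quantile F"
  have q: "q u = ?c + k * w * tail u + k * lam * ?f u + 0 * ?f u" for u
    by (simp add: q_def extremal_quantile_eq k_def w_def)
  note lin_combs = integral_quantile_lin_combs[OF F]
  have "integral\<^sup>L lborel01 q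
      = integral\<^sup>L lborel01 (\<lambda>u. q u * (1 + 0 * tail u + 0 * ?f u + 0 * ?f u))"
    by simp
  also have "\<dots> = \<mu>"
    unfolding q lin_combs using w by algebra
  finally show "integral\<^sup>L lborel01 q = \<mu>" .
  show "integral\<^sup>L lborel01 (\<lambda>u. q u * q u) = \<mu>\<^sup>2 + \<sigma>\<^sup>2"
    unfolding q lin_combs using w k_sq C_def by algebra
  have "integral\<^sup>L lborel01 (\<lambda>u. tail u * q u)
      = integral\<^sup>L lborel01 (\<lambda>u. (0 + 1 * tail u + 0 * ?f u + 0 * ?f u) * q u)"
    by simp
  also have "\<dots> = (1 - \<alpha>) * (\<mu> + k * (V + lam * C))"
    unfolding q lin_combs using w C_def by algebra
  finally show "integral\<^sup>L lborel01 (\<lambda>u. tail u * q u) = (1 - \<alpha>) * tvar_bound lam"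
    by (simp add: tvar_bound_def k_def)
  show "integral\<^sup>L lborel01 (\<lambda>u. (?f u - q u) * (?f u - q u))
      = (dmean F - \<mu>)\<^sup>2 + (dsd F)\<^sup>2 + \<sigma>\<^sup>2 - 2 * (\<sigma> / H lam) * (C + lam * (dsd F)\<^sup>2)"
  proof -
    have integrand: "(\<lambda>u. (?f u - q u) * (?f u - q u)) = (\<lambda>u. (- ?c + - (k * w) * tail u + (1 - k * lam) * ?f u + 0 * ?f u)
        * (- ?c + - (k * w) * tail u + (1 - k * lam) * ?f u + 0 * ?f u))"
      by (simp add: fun_eq_iff q algebra_simps)
    show ?thesis
      unfolding integrand k_def[symmetric] lin_combs using w k_sq C_def by algebra
  qed
qed

lemma TVaR_wass2_sq_distr_extremal_quantile:
  assumes lam: "lam \<ge> 0"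
  defines "G \<equiv> distr lborel01 borel (extremal_quantile lam)"
  shows "TVaR \<alpha> G = tvar_bound lam"
    and "wass2_sq F G = (dmean F - \<mu>)\<^sup>2 + (dsd F)\<^sup>2 + \<sigma>\<^sup>2 - 2 * (\<sigma> / H lam) * (C + lam * (dsd F)\<^sup>2)"
proof -
  let ?q = "extremal_quantile lam" and ?f = "quantile F"
  have q: "?q \<in> borel_measurable borel"
    using square_integrable_extremal_quantile by (simp add: square_integrable_def)
  have AE_eq: "AE u in lborel01. quantile G u = ?q u"
    unfolding G_def by (rule AE_quantile_distr_lborel01[OF q mono_on_extremal_quantile[OF lam]])
  have measurable: "quantile G \<in> borel_measurable lborel01" "?q \<in> borel_measurable lborel01"
    "?f \<in> borel_measurable lborel01" "tail \<in> borel_measurable lborel01"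
    using borel_measurable_quantile[OF real_distribution_distr_lborel01[OF q]] q
      borel_measurable_quantile[OF real_distribution_F]
    by (simp_all add: G_def borel_measurable_lborel01)
  have "(1 - \<alpha>) * TVaR \<alpha> G = integral\<^sup>L lborel01 (\<lambda>u. tail u * ?q u)"
    unfolding integral_tail_quantile[symmetric] using AE_eq measurable
    by (intro integral_cong_AE) (auto intro: borel_measurable_times)
  then show "TVaR \<alpha> G = tvar_bound lam"
    using extremal_quantile_moments(3)[OF lam] \<alpha> by simp
  have "wass2_sq F G = integral\<^sup>L lborel01 (\<lambda>u. (?f u - ?q u) * (?f u - ?q u))"
    unfolding wass2_sq_eq_integral using AE_eq measurable
    by (intro integral_cong_AE) auto
  then show "wass2_sq F G = (dmean F - \<mu>)\<^sup>2 + (dsd F)\<^sup>2 + \<sigma>\<^sup>2 - 2 * (\<sigma> / H lam) * (C + lam * (dsd F)\<^sup>2)"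
    using extremal_quantile_moments(4)[OF lam] by simp
qed

lemma tvar_bound_attained:
  assumes lam: "lam \<ge> 0" and slack: "\<epsilon> \<noteq> \<infinity> \<Longrightarrow> K * H lam \<le> \<sigma> * (C + lam * (dsd F)\<^sup>2)"
  obtains G where "G \<in> amb_set F \<epsilon> \<mu> \<sigma>" and "TVaR \<alpha> G = tvar_bound lam"
proof -
  define G where "G = distr lborel01 borel (extremal_quantile lam)"
  note moments = distr_lborel01_moments[OF square_integrable_extremal_quantile, of lam, folded G_def]
  note G = TVaR_wass2_sq_distr_extremal_quantile[OF lam, folded G_def]
  have "wass2_sq F G \<le> real_of_ereal \<epsilon>" if "\<epsilon> \<noteq> \<infinity>"
  proof -
    have "K \<le> \<sigma> / H lam * (C + lam * (dsd F)\<^sup>2)"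
      using slack[OF that] H_pos[OF lam] by (simp add: field_simps)
    then show ?thesis
      unfolding G(2) K_def by (simp add: power2_eq_square algebra_simps)
  qed
  then have "G \<in> amb_set F \<epsilon> \<mu> \<sigma>"
    using moments extremal_quantile_moments(1,2)[OF lam] by (auto simp: amb_set_def wass2_def)
  then show thesis
    using that G(1) by blast
qed

lemma SUP_TVaR_eq_tvar_bound:
  assumes lam: "lam \<ge> 0"
    and binding: "lam \<noteq> 0 \<Longrightarrow> \<epsilon> \<noteq> \<infinity> \<and> \<sigma> * (C + lam * (dsd F)\<^sup>2) = K * H lam"
    and slack: "\<epsilon> \<noteq> \<infinity> \<Longrightarrow> K * H lam \<le> \<sigma> * (C + lam * (dsd F)\<^sup>2)"
  shows "(SUP G \<in> amb_set F \<epsilon> \<mu> \<sigma>. ereal (TVaR \<alpha> G)) = ereal (tvar_bound lam)"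
proof (rule antisym)
  show "(SUP G \<in> amb_set F \<epsilon> \<mu> \<sigma>. ereal (TVaR \<alpha> G)) \<le> ereal (tvar_bound lam)"
    using TVaR_le_tvar_bound[OF _ lam binding] by (simp add: SUP_least)
  obtain G where "G \<in> amb_set F \<epsilon> \<mu> \<sigma>" "TVaR \<alpha> G = tvar_bound lam"
    using tvar_bound_attained[OF lam slack] .
  then show "ereal (tvar_bound lam) \<le> (SUP G \<in> amb_set F \<epsilon> \<mu> \<sigma>. ereal (TVaR \<alpha> G))"
    by (intro SUP_upper2[of G]) auto
qed

lemma multiplier_threshold_iff:
  assumes A3: "\<epsilon> > ereal ((dmean F - \<mu>)\<^sup>2 + (dsd F - \<sigma>)\<^sup>2)"
  shows "\<epsilon> < ereal ((dmean F - \<mu>)\<^sup>2 + (dsd F - \<sigma>)\<^sup>2 + 2 * \<sigma> * dsd F * (1 - corr unif01 (quantile F) tail))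
    \<longleftrightarrow> \<epsilon> \<noteq> \<infinity> \<and> \<sigma> * C < K * sqrt V"
proof (cases \<epsilon>)
  case (real e)
  have "2 * \<sigma> * dsd F * (1 - corr unif01 (quantile F) tail) = 2 * \<sigma> * dsd F - 2 * (\<sigma> * C / sqrt V)"
    using dsd_F_pos by (simp add: corr_quantile_tail field_simps)
  then have "(dmean F - \<mu>)\<^sup>2 + (dsd F - \<sigma>)\<^sup>2 + 2 * \<sigma> * dsd F * (1 - corr unif01 (quantile F) tail)
      = e + 2 * (K - \<sigma> * C / sqrt V)"
    unfolding K_def using real by (simp add: power2_eq_square field_simps)
  then show ?thesis
    using real V_pos by (simp add: pos_divide_less_eq)
qed (use A3 in auto)

lemma K_less_\<sigma>_dsd:
  assumes "\<epsilon> > ereal ((dmean F - \<mu>)\<^sup>2 + (dsd F - \<sigma>)\<^sup>2)" and "\<epsilon> \<noteq> \<infinity>"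
  shows "K < \<sigma> * dsd F"
  unfolding K_def using assms by (cases \<epsilon>) (auto simp: power2_eq_square field_simps)

lemma multiplier_conditions:
  assumes A3: "\<epsilon> > ereal ((dmean F - \<mu>)\<^sup>2 + (dsd F - \<sigma>)\<^sup>2)"
  defines "lam \<equiv> (if \<epsilon> < ereal ((dmean F - \<mu>)\<^sup>2 + (dsd F - \<sigma>)\<^sup>2
                                  + 2 * \<sigma> * dsd F * (1 - corr unif01 (quantile F) tail))
      then K / (dsd F)\<^sup>2 * sqrt ((C\<^sup>2 - V * (dsd F)\<^sup>2) / (K\<^sup>2 - \<sigma>\<^sup>2 * (dsd F)\<^sup>2)) - C / (dsd F)\<^sup>2
      else 0)"
  shows "lam \<ge> 0"
    and "lam \<noteq> 0 \<Longrightarrow> \<epsilon> \<noteq> \<infinity> \<and> \<sigma> * (C + lam * (dsd F)\<^sup>2) = K * H lam"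
    and "\<epsilon> \<noteq> \<infinity> \<Longrightarrow> K * H lam \<le> \<sigma> * (C + lam * (dsd F)\<^sup>2)"
proof -
  have "lam \<ge> 0 \<and> (lam \<noteq> 0 \<longrightarrow> \<epsilon> \<noteq> \<infinity> \<and> \<sigma> * (C + lam * (dsd F)\<^sup>2) = K * H lam)
      \<and> (\<epsilon> \<noteq> \<infinity> \<longrightarrow> K * H lam \<le> \<sigma> * (C + lam * (dsd F)\<^sup>2))"
  proof (cases "\<epsilon> \<noteq> \<infinity> \<and> \<sigma> * C < K * sqrt V")
    case True
    then show ?thesis
      using multiplier_equation[OF V_pos dsd_F_pos \<sigma>_pos C_nonneg C_sq_le K_less_\<sigma>_dsd[OF A3]]
      by (simp add: lam_def multiplier_threshold_iff[OF A3] H_def)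
  next
    case False
    then show ?thesis
      by (auto simp: lam_def multiplier_threshold_iff[OF A3] H_def)
  qed
  then show "lam \<ge> 0" and "lam \<noteq> 0 \<Longrightarrow> \<epsilon> \<noteq> \<infinity> \<and> \<sigma> * (C + lam * (dsd F)\<^sup>2) = K * H lam"
    and "\<epsilon> \<noteq> \<infinity> \<Longrightarrow> K * H lam \<le> \<sigma> * (C + lam * (dsd F)\<^sup>2)"
    by auto
qed

end

theorem corollary1:
  fixes F :: "real measure" and \<alpha> \<mu> \<sigma> :: real and \<epsilon> :: ereal
  assumes F: "finite_second_moment F"
    and sdF: "dsd F > 0"
    and \<alpha>: "0 < \<alpha>" "\<alpha> < 1"
    and \<sigma>: "\<sigma> > 0"
    and A3: "\<epsilon> > ereal ((dmean F - \<mu>) ^ 2 + (dsd F - \<sigma>) ^ 2)"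
  defines "c0 \<equiv> corr unif01 (\<lambda>u. quantile F u) (indicator {\<alpha><..<1})"
    and "V \<equiv> \<alpha> / (1 - \<alpha>)"
    and "C \<equiv> TVaR \<alpha> F - dmean F"
    and "K \<equiv> (dmean F ^ 2 + dsd F ^ 2 + \<mu> ^ 2 + \<sigma> ^ 2 - 2 * \<mu> * dmean F
               - real_of_ereal \<epsilon>) / 2"
  defines "lam \<equiv> (if \<epsilon> < ereal ((dmean F - \<mu>) ^ 2 + (dsd F - \<sigma>) ^ 2
                                   + 2 * \<sigma> * dsd F * (1 - c0))
               then K / dsd F ^ 2 * sqrt ((C ^ 2 - V * dsd F ^ 2) / (K ^ 2 - \<sigma> ^ 2 * dsd F ^ 2))
                    - C / dsd F ^ 2
               else 0)"
  shows "(SUP G \<in> amb_set F \<epsilon> \<mu> \<sigma>. ereal (TVaR \<alpha> G)) =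
         ereal (\<mu> + \<sigma> * (V + lam * C) / sqrt (V + 2 * lam * C + lam ^ 2 * dsd F ^ 2))"
proof -
  interpret T: tvar_ambiguity F \<alpha> \<mu> \<sigma> \<epsilon>
    using F sdF \<alpha> \<sigma> by unfold_locales
  have params: "V = T.V" "C = T.C" "K = T.K" "c0 = corr unif01 (quantile F) T.tail"
    by (simp_all add: V_def T.V_def C_def T.C_def K_def T.K_def c0_def)
  have "(SUP G \<in> amb_set F \<epsilon> \<mu> \<sigma>. ereal (TVaR \<alpha> G)) = ereal (T.tvar_bound lam)"
    unfolding lam_def params by (intro T.SUP_TVaR_eq_tvar_bound T.multiplier_conditions[OF A3])
  then show ?thesis
    by (simp add: T.tvar_bound_def T.H_def params)
qed

end
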